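(* Let $\varphi:G\times X\to X$ be an action of a metrizable group $G$ on a non-meagre metric space $X$. If each point-evaluation map $\varphi_x:g\mapsto\varphi(g,x)$ is countably-covered and takes open sets to sets with the Baire property, then the action is a Nikodym action.
   Context: A group action satisfies $\varphi(e_G,x)=x$, $\varphi(gh,x)=\varphi(g,\varphi(h,x))$; write $Ux=\varphi_x(U)$. The map $\varphi_x$ is countably-covered if there exist self-homeomorphisms $h^x_n$ ($n\in\mathbb N$) of $X$ such that for every open neighbourhood $U$ (of $e_G$) in $G$ the sets $\{h^x_n(\varphi_x(U)):n\in\mathbb N\}$ cover $X$. The action is a Nikodym action if for every non-empty open neighbourhood $U$ of $e_G$ and every $x\in X$, $Ux$ contains a non-meagre set with the Baire property. *)

theory Defs
  imports "HOL-Analysis.Analysis"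
begin

definition nowhere_dense :: "'a::topological_space set \<Rightarrow> bool" where
  "nowhere_dense A \<longleftrightarrow> interior (closure A) = {}"

definition meagre :: "'a::topological_space set \<Rightarrow> bool" where
  "meagre A \<longleftrightarrow> (\<exists>F :: nat \<Rightarrow> 'a set. (\<forall>n. nowhere_dense (F n)) \<and> A \<subseteq> (\<Union>n. F n))"

definition baire_property :: "'a::topological_space set \<Rightarrow> bool" where
  "baire_property A \<longleftrightarrow> (\<exists>U. open U \<and> meagre ((A - U) \<union> (U - A)))"

text \<open>Group actions; the group is written additively (identity 0), not necessarily abelian.\<close>

definition group_action :: "('g::group_add \<Rightarrow> 'x \<Rightarrow> 'x) \<Rightarrow> bool" where
  "group_action \<phi> \<longleftrightarrow> (\<forall>x. \<phi> 0 x = x) \<and> (\<forall>g h x. \<phi> (g + h) x = \<phi> g (\<phi> h x))"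

definition countably_covered ::
    "('g::{group_add,topological_space} \<Rightarrow> 'x::topological_space \<Rightarrow> 'x) \<Rightarrow> 'x \<Rightarrow> bool" where
  "countably_covered \<phi> x \<longleftrightarrow>
     (\<exists>h :: nat \<Rightarrow> 'x \<Rightarrow> 'x. (\<forall>n. \<exists>k. homeomorphism UNIV UNIV (h n) k) \<and>
        (\<forall>U. open U \<and> 0 \<in> U \<longrightarrow> (\<Union>n. h n ` ((\<lambda>g. \<phi> g x) ` U)) = UNIV))"

definition nikodym_action ::
    "('g::{group_add,topological_space} \<Rightarrow> 'x::topological_space \<Rightarrow> 'x) \<Rightarrow> bool" where
  "nikodym_action \<phi> \<longleftrightarrow>
     (\<forall>U x. open U \<and> U \<noteq> {} \<and> 0 \<in> U \<longrightarrow>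
        (\<exists>A. A \<subseteq> (\<lambda>g. \<phi> g x) ` U \<and> \<not> meagre A \<and> baire_property A))"

end

theory Submission
  imports Defs
begin

text \<open>Meagreness is invariant under self-homeomorphisms and countable unions, so if countably
  many homeomorphic copies of the orbit piece \<open>U x\<close> cover the non-meagre space, \<open>U x\<close> itself
  cannot be meagre; since it has the Baire property by hypothesis, \<open>A = U x\<close> is the required set.\<close>

lemma nowhere_dense_homeomorphic_image:
  fixes A :: "'a::topological_space set"
  assumes hom: "homeomorphism UNIV UNIV h k" and "nowhere_dense A"
  shows "nowhere_dense (h ` A)"
proof -
  have "closed (h ` closure A)"
    using homeomorphism_imp_closed_map[OF hom, of "closure A"] by simp
  then have "closure (h ` A) \<subseteq> h ` closure A"
    by (simp add: closure_minimal closure_subset image_mono)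
  then have "interior (closure (h ` A)) \<subseteq> interior (h ` closure A)"
    by (rule interior_mono)
  moreover have "interior (h ` closure A) = {}"
  proof -
    let ?W = "interior (h ` closure A)"
    have "open (k ` ?W)"
      using homeomorphism_imp_open_map[OF homeomorphism_symD[OF hom], of ?W] by simp
    moreover have "k ` ?W \<subseteq> k ` h ` closure A"
      by (intro image_mono interior_subset)
    then have "k ` ?W \<subseteq> closure A"
      using homeomorphism_apply1[OF hom] by (simp add: image_image)
    ultimately have "k ` ?W \<subseteq> interior (closure A)"
      by (simp add: interior_maximal)
    then show ?thesis
      using \<open>nowhere_dense A\<close> unfolding nowhere_dense_def by simp
  qed
  ultimately show ?thesis
    unfolding nowhere_dense_def by simp
qed

lemma meagre_homeomorphic_image:
  fixes A :: "'a::topological_space set"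
  assumes hom: "homeomorphism UNIV UNIV h k" and "meagre A"
  shows "meagre (h ` A)"
proof -
  obtain F :: "nat \<Rightarrow> 'a set" where F: "\<And>n. nowhere_dense (F n)" "A \<subseteq> (\<Union>n. F n)"
    using \<open>meagre A\<close> unfolding meagre_def by blast
  have "nowhere_dense (h ` F n)" for n
    using hom F(1) by (rule nowhere_dense_homeomorphic_image)
  moreover have "h ` A \<subseteq> (\<Union>n. h ` F n)"
    using F(2) by blast
  ultimately show ?thesis
    unfolding meagre_def by (intro exI[of _ "\<lambda>n. h ` F n"] conjI allI)
qed

lemma meagre_UN:
  fixes A :: "nat \<Rightarrow> 'a::topological_space set"
  assumes "\<And>n. meagre (A n)"
  shows "meagre (\<Union>n. A n)"
proof -
  obtain F :: "nat \<Rightarrow> nat \<Rightarrow> 'a set"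
    where F: "\<And>n m. nowhere_dense (F n m)" "\<And>n. A n \<subseteq> (\<Union>m. F n m)"
  proof -
    have "\<forall>n. \<exists>Fn :: nat \<Rightarrow> 'a set. (\<forall>m. nowhere_dense (Fn m)) \<and> A n \<subseteq> (\<Union>m. Fn m)"
      using assms unfolding meagre_def by blast
    then show ?thesis
      using that by metis
  qed
  define G where "G i = case_prod F (prod_decode i)" for i
  have "(\<Union>n. A n) \<subseteq> (\<Union>i. G i)"
  proof
    fix y assume "y \<in> (\<Union>n. A n)"
    then obtain n m where "y \<in> F n m"
      using F(2) by blast
    then show "y \<in> (\<Union>i. G i)"
      unfolding G_def by (intro UN_I[of "prod_encode (n, m)"]) simp_all
  qed
  moreover have "nowhere_dense (G i)" for i
    unfolding G_def by (cases "prod_decode i") (simp add: F(1))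
  ultimately show ?thesis
    unfolding meagre_def by (intro exI[of _ G] conjI allI)
qed

lemma not_meagre_if_homeomorphic_images_cover:
  fixes S :: "'a::topological_space set" and h :: "nat \<Rightarrow> 'a \<Rightarrow> 'a"
  assumes "\<not> meagre (UNIV :: 'a set)"
    and "\<And>n. \<exists>k. homeomorphism UNIV UNIV (h n) k"
    and "(\<Union>n. h n ` S) = UNIV"
  shows "\<not> meagre S"
proof
  assume "meagre S"
  have "meagre (\<Union>n. h n ` S)"
  proof (rule meagre_UN)
    fix n
    obtain k where "homeomorphism UNIV UNIV (h n) k"
      using assms(2) by blast
    then show "meagre (h n ` S)"
      using \<open>meagre S\<close> by (rule meagre_homeomorphic_image)
  qed
  then show False
    using assms(1,3) by simp
qed

theorem proposition1:
  fixes \<phi> :: "'g::{topological_group_add, metric_space} \<Rightarrow> 'x::metric_space \<Rightarrow> 'x"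
  assumes "group_action \<phi>"
    and "\<not> meagre (UNIV :: 'x set)"
    and "\<forall>x. countably_covered \<phi> x"
    and "\<forall>x U. open U \<longrightarrow> baire_property ((\<lambda>g. \<phi> g x) ` U)"
  shows "nikodym_action \<phi>"
  unfolding nikodym_action_def
proof (intro allI impI)
  fix U :: "'g set" and x :: 'x
  assume U: "open U \<and> U \<noteq> {} \<and> 0 \<in> U"
  have "countably_covered \<phi> x"
    using assms(3) by simp
  then obtain h :: "nat \<Rightarrow> 'x \<Rightarrow> 'x" where hom: "\<forall>n. \<exists>k. homeomorphism UNIV UNIV (h n) k"
    and cover: "\<forall>V. open V \<and> 0 \<in> V \<longrightarrow> (\<Union>n. h n ` ((\<lambda>g. \<phi> g x) ` V)) = UNIV"
    unfolding countably_covered_def by blast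
  have "\<not> meagre ((\<lambda>g. \<phi> g x) ` U)"
  proof (rule not_meagre_if_homeomorphic_images_cover[OF assms(2)])
    show "\<exists>k. homeomorphism UNIV UNIV (h n) k" for n
      using hom by simp
    show "(\<Union>n. h n ` ((\<lambda>g. \<phi> g x) ` U)) = UNIV"
      using cover U by simp
  qed
  moreover have "baire_property ((\<lambda>g. \<phi> g x) ` U)"
    using assms(4) U by simp
  ultimately show "\<exists>A. A \<subseteq> (\<lambda>g. \<phi> g x) ` U \<and> \<not> meagre A \<and> baire_property A"
    by (intro exI[of _ "(\<lambda>g. \<phi> g x) ` U"]) simp
qed

end
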